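(* Suppose $l,m,j$ are integers with $m>0$, $|l|\le m/2$, $|j|\le m/8$. Then $$\mathbb{P}\{S_{2m}=2j+2l\mid S_{4m}=4l\}=2\sqrt{\frac{1}{2\pi m(1-(l/m)^2)}}\;\exp\Big\{-\frac{(2j)^2}{2m(1-(l/m)^2)}+O\Big(\frac1m\Big)+O\Big(\frac{j^4}{m^3}\Big)\Big\},$$ where the $O(\cdot)$ terms are bounded in absolute value by a universal constant times the indicated quantities, uniformly over all such $l,m,j$.
   Context: $S_n$ is simple random walk on $\mathbb{Z}$ started at $0$, with i.i.d. steps equal to $\pm1$ with probability $1/2$ each. *)

theory Defs
  imports "HOL-Probability.Probability"
begin

definition srw_steps :: "nat \<Rightarrow> int list pmf" where
  "srw_steps n = pmf_of_set {xs. length xs = n \<and> set xs \<subseteq> {-1, 1}}"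

definition S :: "nat \<Rightarrow> int list \<Rightarrow> int" where
  "S k xs = sum_list (take k xs)"

definition cond_prob :: "'a pmf \<Rightarrow> 'a set \<Rightarrow> 'a set \<Rightarrow> real" where
  "cond_prob M A B = measure_pmf.prob M (A \<inter> B) / measure_pmf.prob M B"

end

theory Submission
  imports Defs "HOL-Real_Asymp.Real_Asymp"
begin

text \<open>Conditioned on S(4m) = 4l the 4m steps form a uniformly chosen sequence with 2m + 2l up-steps, so the
  probability is the ratio C(2m, m+l+j) C(2m, m+l-j) / C(4m, 2m+2l) of binomial coefficients. All
  nine factorials involved have arguments at least 3m/8, so Stirling's formula with error 4/n (its
  constant identified through Wallis' product) replaces the logarithm of this ratio by a
  combination of (z + 1/2) ln z - z, up to O(1/m). With x = l/m and y = j/m this combination is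
  ln 2 - ln (2 pi m (1 - x^2)) / 2 - 2 m y^2 / (1 - x^2) plus second differences in y of v ln v
  and of ln v, which are O(m y^4) and O(y^2) by the expansion
  (1 + t) ln (1 + t) + (1 - t) ln (1 - t) = t^2 + O(t^4). Finally y^2 <= 1/m + m y^4.\<close>

section \<open>Counting paths\<close>

definition step_seqs :: "nat \<Rightarrow> int list set" where
  "step_seqs n = {xs. length xs = n \<and> set xs \<subseteq> {-1, 1}}"

definition walks_to :: "nat \<Rightarrow> int \<Rightarrow> int list set" where
  "walks_to n s = {xs \<in> step_seqs n. sum_list xs = s}"

lemma finite_step_seqs: "finite (step_seqs n)"
  using finite_lists_length_eq[of "{-1::int, 1}" n] by (simp add: step_seqs_def conj_commute)

lemma replicate_in_step_seqs: "replicate n 1 \<in> step_seqs n"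
  by (auto simp: step_seqs_def set_replicate_conv_if)

lemma finite_walks_to: "finite (walks_to n s)"
  by (simp add: walks_to_def finite_step_seqs)

lemma prob_srw_steps:
  "measure_pmf.prob (srw_steps n) A = card (step_seqs n \<inter> A) / card (step_seqs n)"
  unfolding srw_steps_def step_seqs_def[symmetric]
  using replicate_in_step_seqs finite_step_seqs by (intro measure_pmf_of_set) auto

lemma walks_to_Suc:
  "walks_to (Suc n) s = Cons 1 ` walks_to n (s - 1) \<union> Cons (-1) ` walks_to n (s + 1)"
proof (intro set_eqI iffI)
  fix xs assume "xs \<in> walks_to (Suc n) s"
  then show "xs \<in> Cons 1 ` walks_to n (s - 1) \<union> Cons (-1) ` walks_to n (s + 1)"
    by (cases xs) (auto simp: walks_to_def step_seqs_def)
qed (auto simp: walks_to_def step_seqs_def)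

lemma sum_list_ge_neg_length: "set xs \<subseteq> {-1, 1} \<Longrightarrow> sum_list xs \<ge> - int (length xs)"
  by (induction xs) auto

lemma card_walks_to: "card (walks_to n (2 * int k - int n)) = n choose k"
proof (induction n arbitrary: k)
  case 0
  have "walks_to 0 s = (if s = 0 then {[]} else {})" for s
    by (auto simp: walks_to_def step_seqs_def)
  then show ?case by (cases k) auto
next
  case (Suc n)
  have card_Suc: "card (walks_to (Suc n) s) = card (walks_to n (s - 1)) + card (walks_to n (s + 1))"
    for s unfolding walks_to_Suc
    by (subst card_Un_disjoint) (auto simp: finite_walks_to card_image)
  show ?case
  proof (cases k)
    case 0
    have "walks_to n (- int (Suc n) - 1) = {}"
      using sum_list_ge_neg_length by (fastforce simp: walks_to_def step_seqs_def)
    then show ?thesis using card_Suc[of "- int (Suc n)"] Suc.IH[of 0] 0 by simp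
  next
    case (Suc k')
    have "2 * int k - int (Suc n) - 1 = 2 * int k' - int n"
      and "2 * int k - int (Suc n) + 1 = 2 * int (Suc k') - int n" using Suc by simp_all
    then have "card (walks_to (Suc n) (2 * int k - int (Suc n))) = (n choose k') + (n choose Suc k')"
      using card_Suc[of "2 * int k - int (Suc n)"] Suc.IH by presburger
    then show ?thesis using Suc by simp
  qed
qed

lemma step_seqs_Int_S: "step_seqs n \<inter> {xs. S n xs = s} = walks_to n s"
  by (auto simp: walks_to_def step_seqs_def S_def)

lemma step_seqs_Int_S_S:
  "step_seqs (n1 + n2) \<inter> ({xs. S n1 xs = s1} \<inter> {xs. S (n1 + n2) xs = s})
   = (\<lambda>(u, v). u @ v) ` (walks_to n1 s1 \<times> walks_to n2 (s - s1))"
proof (intro set_eqI iffI)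
  fix xs assume xs: "xs \<in> step_seqs (n1 + n2) \<inter> ({xs. S n1 xs = s1} \<inter> {xs. S (n1 + n2) xs = s})"
  have "sum_list xs = sum_list (take n1 xs) + sum_list (drop n1 xs)"
    by (metis append_take_drop_id sum_list_append)
  then have "(take n1 xs, drop n1 xs) \<in> walks_to n1 s1 \<times> walks_to n2 (s - s1)"
    using xs set_take_subset[of n1 xs] set_drop_subset[of n1 xs]
    by (auto simp: walks_to_def step_seqs_def S_def)
  then show "xs \<in> (\<lambda>(u, v). u @ v) ` (walks_to n1 s1 \<times> walks_to n2 (s - s1))"
    by (intro image_eqI[where x = "(take n1 xs, drop n1 xs)"]) auto
qed (auto simp: walks_to_def step_seqs_def S_def)

lemma card_append_walks_to:
  "card ((\<lambda>(u, v). u @ v) ` (walks_to n1 s1 \<times> walks_to n2 s2))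
   = card (walks_to n1 s1) * card (walks_to n2 s2)"
proof -
  have "inj_on (\<lambda>(u, v). u @ v) (walks_to n1 s1 \<times> walks_to n2 s2)"
  proof (rule inj_onI)
    fix p q assume "p \<in> walks_to n1 s1 \<times> walks_to n2 s2" "q \<in> walks_to n1 s1 \<times> walks_to n2 s2"
      and "(\<lambda>(u, v). u @ v) p = (\<lambda>(u, v). u @ v) q"
    then show "p = q" by (cases p, cases q) (simp add: walks_to_def step_seqs_def)
  qed
  then show ?thesis by (simp add: card_image card_cartesian_product)
qed

lemma cond_prob_S_S_eq_card:
  "cond_prob (srw_steps (n1 + n2)) {xs. S n1 xs = s1} {xs. S (n1 + n2) xs = s}
   = card (walks_to n1 s1) * card (walks_to n2 (s - s1)) / card (walks_to (n1 + n2) s)"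
proof -
  have "card (step_seqs (n1 + n2)) \<noteq> 0"
    using replicate_in_step_seqs finite_step_seqs by (metis card_0_eq empty_iff)
  then show ?thesis
    unfolding cond_prob_def prob_srw_steps step_seqs_Int_S_S step_seqs_Int_S card_append_walks_to
    by simp
qed

lemma cond_prob_bridge_fact:
  fixes m a a' b b' d d' :: nat and l j :: int
  assumes "int a = int m + l + j" "int a' = int m - l - j" "int b = int m + l - j" "int b' = int m - l + j"
    and "int d = 2 * int m + 2 * l" "int d' = 2 * int m - 2 * l"
  shows "cond_prob (srw_steps (4 * m)) {xs. S (2 * m) xs = 2 * j + 2 * l} {xs. S (4 * m) xs = 4 * l}
    = fact (2 * m) * fact (2 * m) * fact d * fact d' / (fact (4 * m) * fact a * fact a' * fact b * fact b')"
proof -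
  have "2 * j + 2 * l = 2 * int a - int (2 * m)"
    and "4 * l - (2 * j + 2 * l) = 2 * int b - int (2 * m)"
    and "4 * l = 2 * int d - int (4 * m)"
    using assms by simp_all
  then have cards: "card (walks_to (2 * m) (2 * j + 2 * l)) = (2 * m) choose a"
    "card (walks_to (2 * m) (4 * l - (2 * j + 2 * l))) = (2 * m) choose b"
    "card (walks_to (4 * m) (4 * l)) = (4 * m) choose d"
    by (simp_all only: card_walks_to)
  have four: "2 * m + 2 * m = 4 * m" by simp
  have "cond_prob (srw_steps (4 * m)) {xs. S (2 * m) xs = 2 * j + 2 * l} {xs. S (4 * m) xs = 4 * l}
      = real ((2 * m) choose a) * real ((2 * m) choose b) / real ((4 * m) choose d)"
    using cond_prob_S_S_eq_card[of "2 * m" "2 * m" "2 * j + 2 * l" "4 * l"] unfolding four cards of_nat_mult .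
  moreover have "2 * m - a = a'" "2 * m - b = b'" "4 * m - d = d'" "a \<le> 2 * m" "b \<le> 2 * m" "d \<le> 4 * m"
    using assms by linarith+
  ultimately show ?thesis
    by (simp add: binomial_fact mult_ac)
qed

lemma ln_one_plus_taylor_bound:
  fixes s :: real
  assumes s: "\<bar>s\<bar> < 1"
  shows "\<bar>ln (1 + s) - (\<Sum>n<N. (-1)^n / real (n + 1) * s^(n + 1))\<bar>
    \<le> \<bar>s\<bar>^(N + 1) / (1 - \<bar>s\<bar>)"
proof -
  define f where "f n = (-1)^n * (1 / real (n + 1)) * s^(Suc n)" for n
  have f_bound: "norm (f n) \<le> \<bar>s\<bar>^(Suc n)" for n
  proof -
    have "norm (f n) = \<bar>s\<bar>^(Suc n) / real (n + 1)"
      by (simp add: f_def abs_mult power_abs)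
    also have "\<dots> \<le> \<bar>s\<bar>^(Suc n)"
      using mult_left_mono[of 1 "1 + real n" "\<bar>s\<bar>^Suc n"] by (simp add: divide_le_eq)
    finally show ?thesis .
  qed
  have "summable f"
    by (rule summable_comparison_test'[OF _ f_bound]) (use s in simp)
  moreover have "ln (1 + s) = suminf f"
    using ln_series[of "1 + s"] s unfolding f_def by simp
  ultimately have ln_split: "ln (1 + s) = (\<Sum>n. f (n + N)) + (\<Sum>n<N. f n)"
    by (simp add: suminf_split_initial_segment)
  have tail_bound: "norm (f (n + N)) \<le> \<bar>s\<bar>^(N + 1) * \<bar>s\<bar>^n" for n
    using f_bound[of "n + N"] by (simp add: power_add mult_ac)
  have geom: "(\<lambda>n. \<bar>s\<bar>^(N + 1) * \<bar>s\<bar>^n) sums (\<bar>s\<bar>^(N + 1) * (1 / (1 - \<bar>s\<bar>)))"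
    using s by (intro sums_mult geometric_sums) simp
  have "\<bar>\<Sum>n. f (n + N)\<bar> \<le> \<bar>s\<bar>^(N + 1) / (1 - \<bar>s\<bar>)"
    using norm_suminf_le[OF tail_bound sums_summable[OF geom]] geom by (simp add: sums_iff)
  then show ?thesis
    unfolding ln_split by (simp add: f_def)
qed

lemma tendsto_telescoping_bound:
  fixes a b :: "nat \<Rightarrow> real"
  assumes step: "\<And>n. \<bar>a n - a (Suc n)\<bar> \<le> b n - b (Suc n)" and b: "b \<longlonglongrightarrow> 0"
  shows "\<exists>c. a \<longlonglongrightarrow> c \<and> (\<forall>n. \<bar>a n - c\<bar> \<le> b n)"
proof -
  have "a n - b n \<le> a (Suc n) - b (Suc n)" "a (Suc n) + b (Suc n) \<le> a n + b n"
    and "b (Suc n) \<le> b n" for n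
    using step[of n] unfolding abs_le_iff by linarith+
  then have lower: "incseq (\<lambda>n. a n - b n)" and upper: "decseq (\<lambda>n. a n + b n)"
    and "decseq b"
    by (auto intro: incseq_SucI decseq_SucI)
  have "a n - b n \<le> a 0 + b 0" for n
    using decseq_ge[OF \<open>decseq b\<close> b, of n] decseqD[OF upper, of 0 n] by simp
  then obtain c where lower_lim: "(\<lambda>n. a n - b n) \<longlonglongrightarrow> c"
    using incseq_convergent[OF lower] by blast
  have "(\<lambda>n. (a n - b n) + b n) \<longlonglongrightarrow> c + 0"
    using lower_lim b by (rule tendsto_add)
  then have a_lim: "a \<longlonglongrightarrow> c" by simp
  have "(\<lambda>n. a n + b n) \<longlonglongrightarrow> c + 0"
    using a_lim b by (rule tendsto_add)
  then have upper_bound: "c \<le> a n + b n" for n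
    using decseq_ge[OF upper] by simp
  have lower_bound: "a n - b n \<le> c" for n
    using incseq_le[OF lower lower_lim] by simp
  have "\<bar>a n - c\<bar> \<le> b n" for n
    using upper_bound[of n] lower_bound[of n] by (auto simp: abs_le_iff)
  with a_lim show ?thesis by blast
qed

lemma power2_le_inverse_add_power4:
  fixes M y :: real
  assumes M: "M > 0"
  shows "y^2 \<le> 1 / M + M * y^4"
proof -
  have "0 \<le> (M * y^2 - 1)^2" "0 \<le> M * y^2"
    using M by simp_all
  then have "M * y^2 \<le> 1 + (M * y^2)^2"
    unfolding power2_diff by simp
  then have "M * y^2 / M \<le> (1 + (M * y^2)^2) / M"
    using M by (rule divide_right_mono[OF _ less_imp_le])
  then show ?thesis
    using M by (simp add: field_simps power2_eq_square power4_eq_xxxx)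
qed

lemma two_sqrt_inverse_eq_exp:
  fixes K :: real
  assumes "K > 0"
  shows "2 * sqrt (1 / K) = exp (ln 2 - ln K / 2)"
proof -
  have sqrt_exp: "sqrt (1 / K) = exp (ln (1 / K) / 2)"
    using assms by (simp add: powr_half_sqrt[symmetric] powr_def)
  have "ln 2 - ln K / 2 = ln 2 + ln (1 / K) / 2"
    using assms by (simp add: ln_div)
  then show ?thesis
    unfolding sqrt_exp by (simp only: exp_add) simp
qed

lemma abs_le_add_split:
  fixes e C p q :: real
  assumes "0 \<le> C" "0 \<le> p" "0 \<le> q" "\<bar>e\<bar> \<le> C * (p + q)"
  obtains e1 e2 where "\<bar>e1\<bar> \<le> C * p" "\<bar>e2\<bar> \<le> C * q" "e = e1 + e2"
proof -
  have "0 \<le> C * p" "0 \<le> C * q" "\<bar>e\<bar> \<le> C * p + C * q"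
    using assms by (simp_all add: distrib_left)
  then consider "\<bar>e\<bar> \<le> C * p" | "C * p < e" "e - C * p \<le> C * q"
    | "e < - (C * p)" "\<bar>e + C * p\<bar> \<le> C * q"
    by linarith
  then show ?thesis
  proof cases
    case 1
    with \<open>0 \<le> C * q\<close> show ?thesis by (intro that[of e 0]) simp_all
  next
    case 2
    with \<open>0 \<le> C * p\<close> show ?thesis by (intro that[of "C * p" "e - C * p"]) simp_all
  next
    case 3
    with \<open>0 \<le> C * p\<close> show ?thesis by (intro that[of "- (C * p)" "e + C * p"]) simp_all
  qed
qed

section \<open>Stirling's formula with explicit error\<close>

definition stirling_seq :: "nat \<Rightarrow> real" where
  "stirling_seq n = ln (fact n) - ((real n + 1/2) * ln (real n) - real n)"

lemma stirling_seq_diff: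
  assumes "n \<ge> 1"
  shows "stirling_seq n - stirling_seq (Suc n) = (real n + 1/2) * ln (1 + 1 / real n) - 1"
proof -
  have fact_Suc: "ln (fact (Suc n) :: real) = ln (real n + 1) + ln (fact n)"
    by (simp add: ln_mult add.commute)
  have "1 + 1 / real n = (real n + 1) / real n"
    using assms by (simp add: field_simps)
  then have ln_quot: "ln (1 + 1 / real n) = ln (real n + 1) - ln (real n)"
    using assms by (simp add: ln_div)
  show ?thesis
    unfolding stirling_seq_def fact_Suc ln_quot by (simp add: algebra_simps)
qed

lemma stirling_seq_diff_bound:
  assumes "n \<ge> 1"
  shows "\<bar>stirling_seq n - stirling_seq (Suc n)\<bar> \<le> 2 / real n ^ 2"
proof (cases "n = 1")
  case True
  have "ln (2::real) \<le> 1" "ln (2::real) \<ge> 0"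
    using ln_le_minus_one[of 2] by simp_all
  moreover have "stirling_seq n - stirling_seq (Suc n) = 3 * ln 2 / 2 - 1" "2 / real n ^ 2 = 2"
    using stirling_seq_diff[OF assms] True by simp_all
  ultimately show ?thesis
    by (simp only: abs_le_iff) linarith
next
  case False
  then have n2: "real n \<ge> 2" using assms by simp
  define s where "s = 1 / real n"
  have s: "0 < s" "s \<le> 1/2" using n2 by (auto simp: s_def field_simps)
  define E where "E = ln (1 + s) - (s - s^2/2 + s^3/3)"
  have "\<bar>E\<bar> \<le> s^4 / (1 - s)"
    using ln_one_plus_taylor_bound[of s 3] s by (simp add: E_def eval_nat_numeral)
  also have "\<dots> \<le> 2 * s^4" using s by (simp add: field_simps)
  finally have "\<bar>(real n + 1/2) * E\<bar> \<le> (real n + 1/2) * (2 * s^4)"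
    using n2 by (simp add: abs_mult mult_left_mono)
  also have "\<dots> \<le> 3 / real n ^ 3"
    using n2 by (simp add: s_def field_simps eval_nat_numeral)
  finally have E_bound: "\<bar>(real n + 1/2) * E\<bar> \<le> 3 / real n ^ 3" .
  have "(real n + 1/2) * (s - s^2/2 + s^3/3) - 1 = 1 / (12 * real n ^ 2) + 1 / (6 * real n ^ 3)"
    using n2 by (simp add: s_def field_simps power2_eq_square power3_eq_cube)
  then have "stirling_seq n - stirling_seq (Suc n)
      = 1 / (12 * real n ^ 2) + 1 / (6 * real n ^ 3) + (real n + 1/2) * E"
    unfolding stirling_seq_diff[OF assms] s_def[symmetric] by (simp add: E_def algebra_simps)
  moreover have "1 / (12 * real n ^ 2) + 1 / (6 * real n ^ 3) + 3 / real n ^ 3 \<le> 2 / real n ^ 2"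
    using n2 by (simp add: field_simps eval_nat_numeral)
  ultimately show ?thesis
    using E_bound by (simp add: abs_le_iff)
qed

lemma stirling_seq_converges:
  "\<exists>c. stirling_seq \<longlonglongrightarrow> c \<and> (\<forall>n\<ge>1. \<bar>stirling_seq n - c\<bar> \<le> 4 / real n)"
proof -
  have step: "\<bar>stirling_seq (Suc n) - stirling_seq (Suc (Suc n))\<bar>
      \<le> 4 / real (Suc n) - 4 / real (Suc (Suc n))" for n
  proof -
    have "4 / real (Suc n) - 4 / real (Suc (Suc n)) = 4 / (real (Suc n) * (real (Suc n) + 1))"
      by (simp add: field_simps)
    moreover have "2 / real (Suc n) ^ 2 \<le> 4 / (real (Suc n) * (real (Suc n) + 1))"
      by (simp add: divide_simps power2_eq_square)
    ultimately show ?thesis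
      using stirling_seq_diff_bound[of "Suc n"] by simp
  qed
  have "(\<lambda>n. 4 / real (Suc n)) \<longlonglongrightarrow> 0"
    by real_asymp
  then obtain c where lim: "(\<lambda>n. stirling_seq (Suc n)) \<longlonglongrightarrow> c"
    and bound: "\<forall>n. \<bar>stirling_seq (Suc n) - c\<bar> \<le> 4 / real (Suc n)"
    using tendsto_telescoping_bound[of "\<lambda>n. stirling_seq (Suc n)" "\<lambda>n. 4 / real (Suc n)", OF step] by blast
  have "\<bar>stirling_seq n - c\<bar> \<le> 4 / real n" if "n \<ge> 1" for n
    using bound that by (cases n) auto
  with LIMSEQ_imp_Suc[OF lim] show ?thesis by blast
qed

lemma wallis_product_fact:
  "(\<Prod>k=1..n. 4 * real k^2 / (4 * real k^2 - 1)) = 16^n * fact n ^ 4 / (fact (2 * n) ^ 2 * (2 * real n + 1))"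
proof -
  define W where "W n = (\<Prod>k=1..n. 4 * real k^2 / (4 * real k^2 - 1))" for n
  have "W n = 16^n * fact n ^ 4 / (fact (2 * n) ^ 2 * (2 * real n + 1))"
  proof (induction n)
    case 0
    then show ?case by (simp add: W_def)
  next
    case (Suc n)
    define x where "x = real n"
    have pos: "x \<ge> 0" "(fact (2 * n) :: real) > 0" "(fact n :: real) > 0"
      by (simp_all add: x_def)
    have W_Suc: "W (Suc n) = W n * (4 * (x + 1)^2 / ((2 * x + 1) * (2 * x + 3)))"
      by (simp add: W_def x_def algebra_simps power2_eq_square)
    have fact_2Suc: "fact (2 * Suc n) = (2 * x + 2) * (2 * x + 1) * fact (2 * n)"
      and fact_Suc: "fact (Suc n) = (x + 1) * fact n"
      by (simp_all add: x_def algebra_simps)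
    have "W (Suc n) = 16 ^ Suc n * ((x + 1) * fact n) ^ 4
        / (((2 * x + 2) * (2 * x + 1) * fact (2 * n)) ^ 2 * (2 * x + 3))"
      unfolding W_Suc Suc.IH x_def[symmetric] using pos by (simp add: divide_simps) algebra
    then show ?case
      unfolding fact_2Suc fact_Suc by (simp add: x_def add_ac)
  qed
  then show ?thesis by (simp add: W_def)
qed

lemma ln_wallis_product:
  assumes n: "n \<ge> 1"
  shows "ln (\<Prod>k=1..n. 4 * real k^2 / (4 * real k^2 - 1))
    = 4 * stirling_seq n - 2 * stirling_seq (2 * n) + ln (real n / (2 * real n + 1)) - ln 2"
proof -
  have "ln (\<Prod>k=1..n. 4 * real k^2 / (4 * real k^2 - 1))
      = real n * ln 16 + 4 * ln (fact n) - 2 * ln (fact (2 * n)) - ln (2 * real n + 1)"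
    unfolding wallis_product_fact by (simp add: ln_mult ln_div ln_realpow)
  moreover have "ln (16::real) = 4 * ln 2"
    using ln_realpow[of 2 4] by simp
  moreover have "ln (real (2 * n)) = ln 2 + ln (real n)"
    using n by (simp add: ln_mult)
  moreover have "ln (real n / (2 * real n + 1)) = ln (real n) - ln (2 * real n + 1)"
    using n by (simp add: ln_div)
  ultimately show ?thesis
    unfolding stirling_seq_def by (simp add: algebra_simps)
qed

lemma stirling_seq_tendsto: "stirling_seq \<longlonglongrightarrow> ln (2 * pi) / 2"
proof -
  obtain c where c: "stirling_seq \<longlonglongrightarrow> c"
    using stirling_seq_converges by blast
  define W where "W n = (\<Prod>k=1..n. 4 * real k^2 / (4 * real k^2 - 1))" for n
  have "(\<lambda>n. ln (W (Suc n))) \<longlonglongrightarrow> ln (pi / 2)"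
    using wallis by (intro tendsto_ln LIMSEQ_Suc) (simp_all add: W_def)
  moreover have "(\<lambda>n. ln (W (Suc n)))
      = (\<lambda>n. 4 * stirling_seq (Suc n) - 2 * stirling_seq (2 * Suc n)
              + ln (real (Suc n) / (2 * real (Suc n) + 1)) - ln 2)"
    unfolding W_def by (rule ext) (rule ln_wallis_product, simp)
  moreover have "(\<lambda>n. 4 * stirling_seq (Suc n) - 2 * stirling_seq (2 * Suc n)
      + ln (real (Suc n) / (2 * real (Suc n) + 1)) - ln 2) \<longlonglongrightarrow> 4 * c - 2 * c + ln (1 / 2) - ln 2"
  proof -
    have "strict_mono (\<lambda>n. 2 * Suc n)"
      by (rule strict_monoI) simp
    then have even: "(\<lambda>n. stirling_seq (2 * Suc n)) \<longlonglongrightarrow> c"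
      using LIMSEQ_subseq_LIMSEQ[OF c] by (simp add: comp_def)
    have ratio: "(\<lambda>n. ln (real (Suc n) / (2 * real (Suc n) + 1))) \<longlonglongrightarrow> ln (1 / 2)"
      by real_asymp
    show ?thesis
      by (intro even ratio LIMSEQ_Suc[OF c] tendsto_intros)
  qed
  ultimately have "ln (pi / 2) = 2 * c + ln (1 / 2) - ln 2"
    using LIMSEQ_unique by fastforce
  then have "c = ln (2 * pi) / 2"
    by (simp add: ln_div ln_mult)
  with c show ?thesis by simp
qed

definition ln_stirling :: "real \<Rightarrow> real" where
  "ln_stirling z = (z + 1/2) * ln z - z + ln (2 * pi) / 2"

lemma ln_fact_ln_stirling_bound:
  assumes "n \<ge> 1"
  shows "\<bar>ln (fact n) - ln_stirling (real n)\<bar> \<le> 4 / real n"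
proof -
  obtain c where "stirling_seq \<longlonglongrightarrow> c" and "\<forall>n\<ge>1. \<bar>stirling_seq n - c\<bar> \<le> 4 / real n"
    using stirling_seq_converges by blast
  moreover have "c = ln (2 * pi) / 2"
    using LIMSEQ_unique \<open>stirling_seq \<longlonglongrightarrow> c\<close> stirling_seq_tendsto by blast
  ultimately show ?thesis
    using assms by (simp add: stirling_seq_def ln_stirling_def algebra_simps)
qed

section \<open>Second differences of v ln v and ln v\<close>

lemma xlnx_even_part_taylor_bound:
  fixes t :: real
  assumes t: "\<bar>t\<bar> \<le> 1/4"
  shows "\<bar>(1 + t) * ln (1 + t) + (1 - t) * ln (1 - t) - t^2\<bar> \<le> 4 * t^4"
proof -
  have rem: "\<bar>s\<bar>^(3 + 1) / (1 - \<bar>s\<bar>) \<le> 4/3 * t^4" if "\<bar>s\<bar> = \<bar>t\<bar>" for s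
  proof -
    have "\<bar>s\<bar>^4 / (1 - \<bar>s\<bar>) \<le> \<bar>s\<bar>^4 / (3/4)"
      using t that by (intro divide_left_mono) auto
    then show ?thesis
      using that by (simp add: power_abs[symmetric] field_simps)
  qed
  define E1 where "E1 = ln (1 + t) - (t - t^2/2 + t^3/3)"
  define E2 where "E2 = ln (1 - t) - (- t - t^2/2 - t^3/3)"
  have E1: "\<bar>E1\<bar> \<le> 4/3 * t^4"
    using order.trans[OF ln_one_plus_taylor_bound[of t 3] rem[of t]] t
    by (simp add: E1_def eval_nat_numeral)
  have E2: "\<bar>E2\<bar> \<le> 4/3 * t^4"
    using order.trans[OF ln_one_plus_taylor_bound[of "-t" 3] rem[of "-t"]] t
    by (simp add: E2_def eval_nat_numeral)
  have "(1 + t) * ln (1 + t) + (1 - t) * ln (1 - t) - t^2 = 2/3 * t^4 + (1 + t) * E1 + (1 - t) * E2"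
    by (simp add: E1_def E2_def field_simps eval_nat_numeral)
  moreover have "\<bar>(1 + t) * E1\<bar> \<le> 5/4 * (4/3 * t^4)"
    unfolding abs_mult by (rule mult_mono) (use t E1 in auto)
  moreover have "\<bar>(1 - t) * E2\<bar> \<le> 5/4 * (4/3 * t^4)"
    unfolding abs_mult by (rule mult_mono) (use t E2 in auto)
  moreover have "0 \<le> t^4" by simp
  ultimately show ?thesis
    by (simp only: abs_le_iff) linarith
qed

lemma xlnx_second_difference_bound:
  fixes u y :: real
  assumes u: "u \<ge> 1/2" and y: "\<bar>y\<bar> \<le> 1/8"
  shows "\<bar>(u + y) * ln (u + y) + (u - y) * ln (u - y) - 2 * u * ln u - y^2 / u\<bar> \<le> 32 * y^4"
proof -
  define t where "t = y / u"
  have "u > 0" using u by simp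
  have t: "\<bar>t\<bar> \<le> 1/4"
    using u y by (simp add: t_def abs_div field_simps)
  have "u + y > 0" "u - y > 0" using u y by auto
  then have "ln (u + y) = ln u + ln (1 + t)" "ln (u - y) = ln u + ln (1 - t)"
    using \<open>u > 0\<close> by (simp_all add: t_def field_simps ln_div)
  then have "(u + y) * ln (u + y) + (u - y) * ln (u - y) - 2 * u * ln u - y^2 / u
      = u * ((1 + t) * ln (1 + t) + (1 - t) * ln (1 - t) - t^2)"
    using \<open>u > 0\<close> by (simp add: t_def field_simps power2_eq_square)
  also have "\<bar>\<dots>\<bar> \<le> u * (4 * t^4)"
    unfolding abs_mult using xlnx_even_part_taylor_bound[OF t] \<open>u > 0\<close> by (simp add: mult_left_mono)
  also have "\<dots> = 4 * y^4 / u^3"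
    using \<open>u > 0\<close> by (simp add: t_def field_simps eval_nat_numeral)
  also have "\<dots> \<le> 4 * y^4 / (1/2)^3"
    using u by (intro divide_left_mono power_mono) auto
  also have "\<dots> = 32 * y^4"
    by (simp add: field_simps eval_nat_numeral)
  finally show ?thesis .
qed

lemma ln_second_difference_bound:
  fixes u y :: real
  assumes u: "u \<ge> 1/2" and y: "\<bar>y\<bar> \<le> 1/8"
  shows "\<bar>ln (u + y) + ln (u - y) - 2 * ln u\<bar> \<le> 8 * y^2"
proof -
  define s where "s = (y / u)^2"
  have "u > 0" using u by simp
  have s: "0 \<le> s" "s \<le> 1/16"
  proof -
    have "\<bar>y / u\<bar> \<le> 1/4"
      using u y by (simp add: abs_div field_simps)
    then have "\<bar>y / u\<bar>^2 \<le> (1/4)^2"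
      by (intro power_mono) auto
    then show "s \<le> 1/16"
      by (simp add: s_def power2_eq_square)
  qed (simp add: s_def)
  have "ln (u + y) + ln (u - y) - 2 * ln u = ln (1 + (- s))"
  proof -
    have "1 + (- s) = (u + y) * (u - y) / u^2"
      using \<open>u > 0\<close> by (simp add: s_def field_simps power2_eq_square)
    moreover have "u + y > 0" "u - y > 0" using u y by auto
    ultimately show ?thesis
      using \<open>u > 0\<close> by (simp add: ln_div ln_mult ln_realpow)
  qed
  also have "\<bar>\<dots>\<bar> \<le> s / (1 - s)"
    using ln_one_plus_taylor_bound[of "- s" 0] s by simp
  also have "\<dots> \<le> 2 * s"
    using s mult_left_mono[of "2 * s" 1 s] by (simp add: field_simps)
  also have "\<dots> \<le> 8 * y^2"
  proof -
    have "y^2 / u^2 \<le> y^2 / (1/2)^2"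
      using u by (intro divide_left_mono power_mono) auto
    then show ?thesis by (simp add: s_def power_divide)
  qed
  finally show ?thesis .
qed

text \<open>Stirling's approximation to the logarithm of
  C(2M, M + L + J) C(2M, M + L - J) / C(4M, 2M + 2L).\<close>

definition ln_stirling_bridge :: "real \<Rightarrow> real \<Rightarrow> real \<Rightarrow> real" where
  "ln_stirling_bridge M L J = 2 * ln_stirling (2 * M) + ln_stirling (2 * M + 2 * L)
    + ln_stirling (2 * M - 2 * L) - ln_stirling (4 * M)
    - ln_stirling (M + L + J) - ln_stirling (M - L - J) - ln_stirling (M + L - J) - ln_stirling (M - L + J)"

lemma ln_stirling_bridge_eq:
  fixes M x y :: real
  assumes M: "M > 0"
    and pos: "1 + x > 0" "1 - x > 0" "1 + x + y > 0" "1 - x - y > 0" "1 + x - y > 0" "1 - x + y > 0"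
  shows "ln_stirling_bridge M (M * x) (M * y)
    = ln 2 - ln (2 * pi) / 2 - ln M / 2
      + M * (2 * (1 + x) * ln (1 + x) + 2 * (1 - x) * ln (1 - x)
        - (1 + x + y) * ln (1 + x + y) - (1 + x - y) * ln (1 + x - y)
        - (1 - x + y) * ln (1 - x + y) - (1 - x - y) * ln (1 - x - y))
      + (ln (1 + x) + ln (1 - x) - ln (1 + x + y) - ln (1 + x - y) - ln (1 - x + y) - ln (1 - x - y)) / 2"
proof -
  have ln_2M: "ln (2 * M) = ln 2 + ln M" and ln_4M: "ln (4 * M) = 2 * ln 2 + ln M"
    using M ln_realpow[of 2 2] by (simp_all add: ln_mult)
  have ln_2Mv: "ln (2 * M * v) = ln 2 + ln M + ln v" and ln_Mv: "ln (M * v) = ln M + ln v"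
    if "v > 0" for v
    using M that by (simp_all add: ln_mult)
  have args: "2 * M + 2 * (M * x) = 2 * M * (1 + x)" "2 * M - 2 * (M * x) = 2 * M * (1 - x)"
    "M + M * x + M * y = M * (1 + x + y)" "M - M * x - M * y = M * (1 - x - y)"
    "M + M * x - M * y = M * (1 + x - y)" "M - M * x + M * y = M * (1 - x + y)"
    by (simp_all add: algebra_simps)
  show ?thesis
    unfolding ln_stirling_bridge_def args ln_stirling_def ln_2M ln_4M ln_2Mv[OF pos(1)] ln_2Mv[OF pos(2)]
      ln_Mv[OF pos(3)] ln_Mv[OF pos(4)] ln_Mv[OF pos(5)] ln_Mv[OF pos(6)]
    by (simp add: field_simps)
qed

lemma ln_stirling_bridge_approx:
  fixes M x y :: real
  assumes M: "M > 0" and x: "\<bar>x\<bar> \<le> 1/2" and y: "\<bar>y\<bar> \<le> 1/8"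
  shows "\<bar>ln_stirling_bridge M (M * x) (M * y)
      - (ln 2 - ln (2 * pi * M * (1 - x^2)) / 2 - 2 * M * y^2 / (1 - x^2))\<bar>
    \<le> 64 * M * y^4 + 8 * y^2"
proof -
  have pos: "1 + x > 0" "1 - x > 0" "1 + x + y > 0" "1 - x - y > 0" "1 + x - y > 0" "1 - x + y > 0"
    using x y by auto
  have u: "1 + x \<ge> 1/2" "1 - x \<ge> 1/2" using x by auto
  define E1 where "E1 = (1 + x + y) * ln (1 + x + y) + (1 + x - y) * ln (1 + x - y)
    - 2 * (1 + x) * ln (1 + x) - y^2 / (1 + x)"
  define E2 where "E2 = (1 - x + y) * ln (1 - x + y) + (1 - x - y) * ln (1 - x - y)
    - 2 * (1 - x) * ln (1 - x) - y^2 / (1 - x)"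
  define D1 where "D1 = ln (1 + x + y) + ln (1 + x - y) - 2 * ln (1 + x)"
  define D2 where "D2 = ln (1 - x + y) + ln (1 - x - y) - 2 * ln (1 - x)"
  have "1 - x^2 = (1 + x) * (1 - x)"
    by (simp add: algebra_simps power2_eq_square)
  then have ln_prefactor: "ln (2 * pi * M * (1 - x^2)) = ln (2 * pi) + ln M + ln (1 + x) + ln (1 - x)"
    using M pos by (simp add: ln_mult del: ln_mult_pos)
  have "y^2 / (1 + x) + y^2 / (1 - x) = 2 * y^2 / (1 - x^2)"
    using pos by (simp add: field_simps power2_eq_square)
  then have xlnx_terms: "2 * (1 + x) * ln (1 + x) + 2 * (1 - x) * ln (1 - x)
      - (1 + x + y) * ln (1 + x + y) - (1 + x - y) * ln (1 + x - y)
      - (1 - x + y) * ln (1 - x + y) - (1 - x - y) * ln (1 - x - y) = - (E1 + E2) - 2 * y^2 / (1 - x^2)"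
    unfolding E1_def E2_def by (simp add: algebra_simps)
  have ln_terms: "ln (1 + x) + ln (1 - x) - ln (1 + x + y) - ln (1 + x - y) - ln (1 - x + y) - ln (1 - x - y)
      = - (D1 + D2) - ln (1 + x) - ln (1 - x)"
    unfolding D1_def D2_def by (simp add: algebra_simps)
  have "\<bar>E1 + E2\<bar> \<le> 64 * y^4"
    using xlnx_second_difference_bound[OF u(1) y] xlnx_second_difference_bound[OF u(2) y]
    unfolding E1_def E2_def by (simp add: add.assoc diff_add_eq)
  moreover have "\<bar>D1 + D2\<bar> \<le> 16 * y^2"
    using ln_second_difference_bound[OF u(1) y] ln_second_difference_bound[OF u(2) y]
    unfolding D1_def D2_def by (simp add: add.assoc diff_add_eq)
  ultimately have "\<bar>M * (E1 + E2)\<bar> \<le> M * (64 * y^4)" "\<bar>(D1 + D2) / 2\<bar> \<le> 8 * y^2"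
    using M by (simp_all add: abs_mult mult_left_mono)
  then have "\<bar>- M * (E1 + E2) - (D1 + D2) / 2\<bar> \<le> 64 * M * y^4 + 8 * y^2"
    by arith
  then show ?thesis
    unfolding ln_stirling_bridge_eq[OF M pos] xlnx_terms ln_terms ln_prefactor
    by (simp add: field_simps)
qed

section \<open>The local limit estimate\<close>

lemma ln_fact_ln_stirling_bound_large:
  assumes M: "M > 0" and n: "3 * M / 8 \<le> real n"
  shows "\<bar>ln (fact n) - ln_stirling (real n)\<bar> \<le> 11 / M"
proof -
  have "n \<ge> 1" using M n by simp
  have "4 / real n \<le> 4 / (3 * M / 8)"
    using M n by (intro divide_left_mono) auto
  also have "\<dots> \<le> 11 / M"
    using M by (simp add: field_simps)
  finally show ?thesis
    using ln_fact_ln_stirling_bound[OF \<open>n \<ge> 1\<close>] by simp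
qed

lemma cond_prob_bridge_ln_stirling:
  fixes l j :: int and m :: nat
  assumes m: "m > 0" and l: "\<bar>real_of_int l\<bar> \<le> real m / 2" and j: "\<bar>real_of_int j\<bar> \<le> real m / 8"
  shows "\<exists>R. \<bar>R\<bar> \<le> 99 / real m \<and>
    cond_prob (srw_steps (4 * m)) {xs. S (2 * m) xs = 2 * j + 2 * l} {xs. S (4 * m) xs = 4 * l}
    = exp (ln_stirling_bridge (real m) (real_of_int l) (real_of_int j) + R)"
proof -
  define P where "P = cond_prob (srw_steps (4 * m)) {xs. S (2 * m) xs = 2 * j + 2 * l} {xs. S (4 * m) xs = 4 * l}"
  have M: "real m > 0" using m by simp
  have "0 \<le> int m + l + j" "0 \<le> int m - l - j" "0 \<le> int m + l - j" "0 \<le> int m - l + j"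
    "0 \<le> 2 * int m + 2 * l" "0 \<le> 2 * int m - 2 * l"
    using l j by linarith+
  then obtain a a' b b' d d' :: nat
    where ints: "int a = int m + l + j" "int a' = int m - l - j" "int b = int m + l - j"
      "int b' = int m - l + j" "int d = 2 * int m + 2 * l" "int d' = 2 * int m - 2 * l"
    by (metis zero_le_imp_eq_int)
  have lin: "real a = real m + l + j" "real a' = real m - l - j" "real b = real m + l - j"
    "real b' = real m - l + j" "real d = 2 * real m + 2 * real_of_int l"
    "real d' = 2 * real m - 2 * real_of_int l"
    using ints[THEN arg_cong[where f = real_of_int]] by simp_all
  define err where "err n = ln (fact n) - ln_stirling (real n)" for n
  have "3 * real m / 8 \<le> real n" if "n \<in> {2 * m, 4 * m, a, a', b, b', d, d'}" for n
    using that l j lin by (auto simp: abs_le_iff)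
  then have "\<bar>err n\<bar> \<le> 11 / real m" if "n \<in> {2 * m, 4 * m, a, a', b, b', d, d'}" for n
    unfolding err_def using ln_fact_ln_stirling_bound_large[OF M] that by blast
  then have "\<bar>err (2 * m)\<bar> \<le> 11 / real m" "\<bar>err (4 * m)\<bar> \<le> 11 / real m"
    "\<bar>err a\<bar> \<le> 11 / real m" "\<bar>err a'\<bar> \<le> 11 / real m" "\<bar>err b\<bar> \<le> 11 / real m"
    "\<bar>err b'\<bar> \<le> 11 / real m" "\<bar>err d\<bar> \<le> 11 / real m" "\<bar>err d'\<bar> \<le> 11 / real m"
    by simp_all
  then have "\<bar>2 * err (2 * m) + err d + err d' - err (4 * m) - err a - err a' - err b - err b'\<bar>
      \<le> 99 / real m"
    unfolding abs_le_iff by (intro conjI) linarith+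
  moreover have P: "P = fact (2 * m) * fact (2 * m) * fact d * fact d'
      / (fact (4 * m) * fact a * fact a' * fact b * fact b')"
    unfolding P_def by (rule cond_prob_bridge_fact[OF ints])
  then have "ln P = ln_stirling_bridge (real m) l j
      + (2 * err (2 * m) + err d + err d' - err (4 * m) - err a - err a' - err b - err b')"
    unfolding ln_stirling_bridge_def err_def lin[symmetric] by (simp add: ln_mult ln_div)
  moreover have "P > 0"
    unfolding P by simp
  ultimately show ?thesis
    unfolding P_def[symmetric] by (metis exp_ln)
qed

lemma cond_prob_bridge_local_limit:
  fixes l j :: int and m :: nat
  assumes m: "m > 0" and l: "\<bar>real_of_int l\<bar> \<le> real m / 2" and j: "\<bar>real_of_int j\<bar> \<le> real m / 8"
  shows "\<exists>e1 e2. \<bar>e1\<bar> \<le> 107 * (1 / real m) \<and> \<bar>e2\<bar> \<le> 107 * (real_of_int j ^ 4 / real m ^ 3) \<and>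
    cond_prob (srw_steps (4 * m)) {xs. S (2 * m) xs = 2 * j + 2 * l} {xs. S (4 * m) xs = 4 * l}
    = 2 * sqrt (1 / (2 * pi * real m * (1 - (real_of_int l / real m)^2)))
      * exp (- ((2 * real_of_int j)^2) / (2 * real m * (1 - (real_of_int l / real m)^2)) + e1 + e2)"
proof -
  define x where "x = real_of_int l / real m"
  define y where "y = real_of_int j / real m"
  define K where "K = 2 * pi * real m * (1 - x^2)"
  have M: "real m > 0" using m by simp
  then have scaled: "real m * x = real_of_int l" "real m * y = real_of_int j"
    by (simp_all add: x_def y_def)
  have "\<bar>x\<bar> \<le> 1/2" "\<bar>y\<bar> \<le> 1/8"
    using l j M by (simp_all add: x_def y_def abs_div field_simps)
  then have "K > 0"
    using M by (simp add: K_def abs_square_less_1)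
  obtain R where R: "\<bar>R\<bar> \<le> 99 / real m"
    and P: "cond_prob (srw_steps (4 * m)) {xs. S (2 * m) xs = 2 * j + 2 * l} {xs. S (4 * m) xs = 4 * l}
      = exp (ln_stirling_bridge (real m) (real m * x) (real m * y) + R)"
    using cond_prob_bridge_ln_stirling[OF m l j] unfolding scaled by blast
  define e where "e = ln_stirling_bridge (real m) (real m * x) (real m * y) + R
    - (ln 2 - ln K / 2 - 2 * real m * y^2 / (1 - x^2))"
  have "\<bar>e\<bar> \<le> 99 / real m + 64 * real m * y^4 + 8 * y^2"
    using ln_stirling_bridge_approx[OF M \<open>\<bar>x\<bar> \<le> 1/2\<close> \<open>\<bar>y\<bar> \<le> 1/8\<close>] R
    unfolding e_def K_def by linarith
  moreover have "real m * y^4 = real_of_int j ^ 4 / real m ^ 3"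
    using M by (simp add: y_def field_simps eval_nat_numeral)
  moreover have q: "0 \<le> real_of_int j ^ 4 / real m ^ 3"
    by simp
  ultimately have e_bound: "\<bar>e\<bar> \<le> 107 * (1 / real m + real_of_int j ^ 4 / real m ^ 3)"
    using power2_le_inverse_add_power4[OF M, of y] unfolding distrib_left mult.assoc by linarith
  obtain e1 e2 where "\<bar>e1\<bar> \<le> 107 * (1 / real m)"
    and "\<bar>e2\<bar> \<le> 107 * (real_of_int j ^ 4 / real m ^ 3)" and "e = e1 + e2"
    by (rule abs_le_add_split[OF _ _ q e_bound]) simp_all
  moreover have "2 * real m * y^2 / (1 - x^2) = (2 * real_of_int j)^2 / (2 * real m * (1 - x^2))"
    using M \<open>K > 0\<close> by (simp add: K_def y_def field_simps power2_eq_square)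
  ultimately show ?thesis
    using P two_sqrt_inverse_eq_exp[OF \<open>K > 0\<close>]
    unfolding e_def K_def x_def[symmetric] by (auto simp: exp_add[symmetric] algebra_simps)
qed

theorem lemma6:
  shows "\<exists>C::real. \<forall>(l::int) (m::nat) (j::int).
    m > 0 \<and> \<bar>real_of_int l\<bar> \<le> real m / 2 \<and> \<bar>real_of_int j\<bar> \<le> real m / 8 \<longrightarrow>
    (\<exists>e1 e2::real. \<bar>e1\<bar> \<le> C * (1 / real m) \<and> \<bar>e2\<bar> \<le> C * (real_of_int j ^ 4 / real m ^ 3) \<and>
      cond_prob (srw_steps (4 * m))
        {xs. S (2 * m) xs = 2 * j + 2 * l} {xs. S (4 * m) xs = 4 * l}
      = 2 * sqrt (1 / (2 * pi * real m * (1 - (real_of_int l / real m)^2)))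
          * exp (- ((2 * real_of_int j)^2) / (2 * real m * (1 - (real_of_int l / real m)^2)) + e1 + e2))"
  by (rule exI[of _ 107]) (blast intro: cond_prob_bridge_local_limit)

end
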